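(* Let $I$ be a countable set with $|I|\ge2$, let $\mathfrak{M}_i=(S_i,\mathcal{L}_i)$, $i\in I$, be partial linear spaces, $\mathfrak{M}=\bigotimes_{i\in I}\mathfrak{M}_i$ with point set $S=\prod_{i\in I}S_i$, and let $\mathcal{H}_i$ be a hyperplane of $\mathfrak{M}_i$ for each $i\in I$. Then the set $$\mathcal{H}=\bigcup_{i\in I}\{x\in S: x_i\in\mathcal{H}_i\}$$ is a degenerate and non-spiky hyperplane of $\mathfrak{M}$.
   Context: A partial linear space is a pair $(S,\mathcal{L})$ of points and lines such that every line has at least two points, every point lies on a line, two distinct lines share at most one point; points are collinear if on a common line. A subspace is a set such that any line meeting it in at least two points lies in it; a hyperplane is a proper subspace meeting every line; a set $X$ is spiky if every point of $X$ is collinear with some point outside $X$. Segre product: for $a\in S$, $x\in S_i$, $a[i/x]$ is $a$ with $i$-th coordinate replaced by $x$, $a[i/A]=\{a[i/x]:x\in A\}$; lines are $a[i/l]$, $a\in S$, $i\in I$, $l\in\mathcal{L}_i$. For a hyperplane $\mathcal{H}$, $\mathcal{H}^{[a]}_i=\{x\in S_i:a[i/x]\in\mathcal{H}\}$; $\mathcal{H}$ is non-degenerate if all $\mathcal{H}^{[a]}_i$ ($a\in S$, $i\in I$) are hyperplanes of $\mathfrak{M}_i$, and degenerate otherwise. *)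

theory Defs
  imports Main "HOL-Library.FuncSet" "HOL-Library.Countable_Set"
begin

definition partial_linear_space :: "'a set \<Rightarrow> 'a set set \<Rightarrow> bool" where
  "partial_linear_space S L \<longleftrightarrow>
     (\<forall>l\<in>L. l \<subseteq> S \<and> (\<exists>x y. x \<in> l \<and> y \<in> l \<and> x \<noteq> y)) \<and>
     (\<forall>p\<in>S. \<exists>l\<in>L. p \<in> l) \<and>
     (\<forall>l\<in>L. \<forall>m\<in>L. l \<noteq> m \<longrightarrow> (\<forall>x y. x \<in> l \<inter> m \<and> y \<in> l \<inter> m \<longrightarrow> x = y))"

definition collinear_pls :: "'a set set \<Rightarrow> 'a \<Rightarrow> 'a \<Rightarrow> bool" where
  "collinear_pls L x y \<longleftrightarrow> (\<exists>l\<in>L. x \<in> l \<and> y \<in> l)"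

definition subspace_pls :: "'a set \<Rightarrow> 'a set set \<Rightarrow> 'a set \<Rightarrow> bool" where
  "subspace_pls S L X \<longleftrightarrow> X \<subseteq> S \<and>
     (\<forall>l\<in>L. (\<exists>x y. x \<in> l \<inter> X \<and> y \<in> l \<inter> X \<and> x \<noteq> y) \<longrightarrow> l \<subseteq> X)"

definition hyperplane_pls :: "'a set \<Rightarrow> 'a set set \<Rightarrow> 'a set \<Rightarrow> bool" where
  "hyperplane_pls S L X \<longleftrightarrow> subspace_pls S L X \<and> X \<noteq> S \<and> (\<forall>l\<in>L. l \<inter> X \<noteq> {})"

definition spiky :: "'a set \<Rightarrow> 'a set set \<Rightarrow> 'a set \<Rightarrow> bool" where
  "spiky S L X \<longleftrightarrow> (\<forall>x\<in>X. \<exists>y\<in>S - X. collinear_pls L x y)"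

text \<open>Segre product of the spaces (Si i, Li i), i in I. Points are the
  extensional functions in the product; a[i/x] is the update a(i := x).\<close>
definition segre_points :: "'i set \<Rightarrow> ('i \<Rightarrow> 'a set) \<Rightarrow> ('i \<Rightarrow> 'a) set" where
  "segre_points I Si = PiE I Si"

definition subst_set :: "('i \<Rightarrow> 'a) \<Rightarrow> 'i \<Rightarrow> 'a set \<Rightarrow> ('i \<Rightarrow> 'a) set" where
  "subst_set a i A = (\<lambda>x. a(i := x)) ` A"

definition segre_lines :: "'i set \<Rightarrow> ('i \<Rightarrow> 'a set) \<Rightarrow> ('i \<Rightarrow> 'a set set) \<Rightarrow> ('i \<Rightarrow> 'a) set set" where
  "segre_lines I Si Li = {subst_set a i l | a i l. a \<in> segre_points I Si \<and> i \<in> I \<and> l \<in> Li i}"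

definition section_set :: "('i \<Rightarrow> 'a set) \<Rightarrow> ('i \<Rightarrow> 'a) set \<Rightarrow> ('i \<Rightarrow> 'a) \<Rightarrow> 'i \<Rightarrow> 'a set" where
  "section_set Si H a i = {x \<in> Si i. a(i := x) \<in> H}"

definition non_degenerate :: "'i set \<Rightarrow> ('i \<Rightarrow> 'a set) \<Rightarrow> ('i \<Rightarrow> 'a set set) \<Rightarrow> ('i \<Rightarrow> 'a) set \<Rightarrow> bool" where
  "non_degenerate I Si Li H \<longleftrightarrow>
     (\<forall>a\<in>segre_points I Si. \<forall>i\<in>I. hyperplane_pls (Si i) (Li i) (section_set Si H a i))"

definition degenerate :: "'i set \<Rightarrow> ('i \<Rightarrow> 'a set) \<Rightarrow> ('i \<Rightarrow> 'a set set) \<Rightarrow> ('i \<Rightarrow> 'a) set \<Rightarrow> bool" where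
  "degenerate I Si Li H \<longleftrightarrow> \<not> non_degenerate I Si Li H"

end

theory Submission
  imports Defs
begin

text \<open>
  A Segre line moves a single coordinate. If it moves coordinate i, the union H contains it as
  soon as some other coordinate of it lies in the corresponding hyperplane; otherwise its points
  lie in H exactly when their i-th coordinate lies in Hi i, and Hi i is a subspace meeting every
  line. A point outside every Hi k witnesses H \<noteq> S. A point c with all coordinates in the
  hyperplanes shows both remaining claims: the section of H at c in direction i is all of Si i
  because c j \<in> Hi j for some j \<noteq> i, and every point collinear with c still has two
  coordinates in the hyperplanes, hence lies in H.
\<close>

definition segre_coordinate_union ::
  "'i set \<Rightarrow> ('i \<Rightarrow> 'a set) \<Rightarrow> ('i \<Rightarrow> 'a set) \<Rightarrow> ('i \<Rightarrow> 'a) set" where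
  "segre_coordinate_union I Si Hi = (\<Union>i\<in>I. {x \<in> segre_points I Si. x i \<in> Hi i})"

lemma mem_segre_coordinate_union:
  "x \<in> segre_coordinate_union I Si Hi \<longleftrightarrow> x \<in> segre_points I Si \<and> (\<exists>i\<in>I. x i \<in> Hi i)"
  unfolding segre_coordinate_union_def by blast

lemma mem_segre_lines:
  "L \<in> segre_lines I Si Li \<longleftrightarrow>
     (\<exists>a i l. L = subst_set a i l \<and> a \<in> segre_points I Si \<and> i \<in> I \<and> l \<in> Li i)"
  unfolding segre_lines_def by blast

lemma fun_upd_in_segre_points:
  assumes "a \<in> segre_points I Si" "i \<in> I" "x \<in> Si i"
  shows "a(i := x) \<in> segre_points I Si"
  using assms unfolding segre_points_def by (auto simp: PiE_iff extensional_def)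

lemma collinear_segre_lines_differ_in_one_coordinate:
  assumes "collinear_pls (segre_lines I Si Li) x y"
  shows "\<exists>k. \<forall>m. m \<noteq> k \<longrightarrow> x m = y m"
proof -
  obtain L where "L \<in> segre_lines I Si Li" "x \<in> L" "y \<in> L"
    using assms unfolding collinear_pls_def by blast
  then obtain a k l where "x \<in> subst_set a k l" "y \<in> subst_set a k l"
    unfolding mem_segre_lines by blast
  then show ?thesis
    unfolding subst_set_def by auto
qed

lemma hyperplane_pls_nonempty:
  assumes "partial_linear_space S L" "hyperplane_pls S L H"
  shows "H \<noteq> {}"
proof -
  obtain p where "p \<in> S"
    using assms(2) unfolding hyperplane_pls_def subspace_pls_def by blast
  then obtain l where "l \<in> L"
    using assms(1) unfolding partial_linear_space_def by blast
  then show ?thesis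
    using assms(2) unfolding hyperplane_pls_def by blast
qed

lemma subspace_segre_coordinate_union:
  assumes lines_in_points: "\<And>i l. i \<in> I \<Longrightarrow> l \<in> Li i \<Longrightarrow> l \<subseteq> Si i"
    and subspaces: "\<And>i. i \<in> I \<Longrightarrow> subspace_pls (Si i) (Li i) (Hi i)"
  shows "subspace_pls (segre_points I Si) (segre_lines I Si Li) (segre_coordinate_union I Si Hi)"
  unfolding subspace_pls_def
proof (intro conjI ballI impI)
  let ?H = "segre_coordinate_union I Si Hi"
  show "?H \<subseteq> segre_points I Si"
    by (auto simp: mem_segre_coordinate_union)
  fix L assume "L \<in> segre_lines I Si Li"
    and two_points: "\<exists>p q. p \<in> L \<inter> ?H \<and> q \<in> L \<inter> ?H \<and> p \<noteq> q"
  then obtain a i l where L: "L = subst_set a i l" "a \<in> segre_points I Si" "i \<in> I" "l \<in> Li i"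
    unfolding mem_segre_lines by blast
  have point: "a(i := z) \<in> segre_points I Si" if "z \<in> l" for z
    using fun_upd_in_segre_points[OF L(2,3)] lines_in_points[OF L(3,4)] that by blast
  show "L \<subseteq> ?H"
  proof (cases "\<exists>j\<in>I. j \<noteq> i \<and> a j \<in> Hi j")
    case True
    then have "a(i := z) \<in> ?H" if "z \<in> l" for z
      using point[OF that] by (auto simp: mem_segre_coordinate_union)
    then show ?thesis
      unfolding L(1) subst_set_def by blast
  next
    case False
    have in_H: "a(i := z) \<in> ?H \<longleftrightarrow> z \<in> Hi i" if "z \<in> l" for z
    proof
      assume "a(i := z) \<in> ?H"
      then obtain k where "k \<in> I" "(a(i := z)) k \<in> Hi k"
        unfolding mem_segre_coordinate_union by blast
      with False show "z \<in> Hi i"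
        by (cases "k = i") auto
    next
      assume "z \<in> Hi i"
      then show "a(i := z) \<in> ?H"
        using point[OF that] L(3) unfolding mem_segre_coordinate_union by auto
    qed
    from two_points obtain x y where "x \<in> l" "y \<in> l" "x \<in> Hi i" "y \<in> Hi i" "x \<noteq> y"
      unfolding L(1) subst_set_def using in_H by auto
    then have "l \<subseteq> Hi i"
      using subspaces[OF L(3)] L(4) unfolding subspace_pls_def by blast
    then show ?thesis
      unfolding L(1) subst_set_def using in_H by blast
  qed
qed

lemma segre_coordinate_union_meets_segre_lines:
  assumes lines_in_points: "\<And>i l. i \<in> I \<Longrightarrow> l \<in> Li i \<Longrightarrow> l \<subseteq> Si i"
    and meets: "\<And>i l. i \<in> I \<Longrightarrow> l \<in> Li i \<Longrightarrow> l \<inter> Hi i \<noteq> {}"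
    and "L \<in> segre_lines I Si Li"
  shows "L \<inter> segre_coordinate_union I Si Hi \<noteq> {}"
proof -
  obtain a i l where L: "L = subst_set a i l" "a \<in> segre_points I Si" "i \<in> I" "l \<in> Li i"
    using assms(3) by (auto simp: mem_segre_lines)
  obtain x where "x \<in> l" "x \<in> Hi i"
    using meets[OF L(3,4)] by blast
  then have "a(i := x) \<in> L \<inter> segre_coordinate_union I Si Hi"
    using L lines_in_points fun_upd_in_segre_points
    by (force simp: subst_set_def mem_segre_coordinate_union)
  then show ?thesis by blast
qed

lemma segre_coordinate_union_proper:
  assumes "\<And>i. i \<in> I \<Longrightarrow> Hi i \<subset> Si i"
  shows "segre_coordinate_union I Si Hi \<noteq> segre_points I Si"
proof -
  have "PiE I (\<lambda>i. Si i - Hi i) \<noteq> {}"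
    using assms by (auto simp: PiE_eq_empty_iff)
  then obtain b where "b \<in> PiE I (\<lambda>i. Si i - Hi i)" by blast
  then have "b \<in> segre_points I Si" "b \<notin> segre_coordinate_union I Si Hi"
    by (auto simp: segre_points_def PiE_iff mem_segre_coordinate_union)
  then show ?thesis by blast
qed

lemma hyperplane_segre_coordinate_union:
  assumes "\<And>i. i \<in> I \<Longrightarrow> partial_linear_space (Si i) (Li i)"
    and hyperplanes: "\<And>i. i \<in> I \<Longrightarrow> hyperplane_pls (Si i) (Li i) (Hi i)"
  shows "hyperplane_pls (segre_points I Si) (segre_lines I Si Li) (segre_coordinate_union I Si Hi)"
proof -
  have lines_in_points: "\<And>i l. i \<in> I \<Longrightarrow> l \<in> Li i \<Longrightarrow> l \<subseteq> Si i"
    using assms(1) unfolding partial_linear_space_def by blast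
  have subspaces: "\<And>i. i \<in> I \<Longrightarrow> subspace_pls (Si i) (Li i) (Hi i)"
    and meets: "\<And>i l. i \<in> I \<Longrightarrow> l \<in> Li i \<Longrightarrow> l \<inter> Hi i \<noteq> {}"
    and proper: "\<And>i. i \<in> I \<Longrightarrow> Hi i \<subset> Si i"
    using hyperplanes unfolding hyperplane_pls_def subspace_pls_def by blast+
  show ?thesis
    unfolding hyperplane_pls_def
  proof (intro conjI ballI)
    show "subspace_pls (segre_points I Si) (segre_lines I Si Li) (segre_coordinate_union I Si Hi)"
      using lines_in_points subspaces by (rule subspace_segre_coordinate_union)
    show "segre_coordinate_union I Si Hi \<noteq> segre_points I Si"
      using proper by (rule segre_coordinate_union_proper)
    show "L \<inter> segre_coordinate_union I Si Hi \<noteq> {}" if "L \<in> segre_lines I Si Li" for L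
      using lines_in_points meets that by (rule segre_coordinate_union_meets_segre_lines)
  qed
qed

lemma section_segre_coordinate_union_full:
  assumes "a \<in> segre_points I Si" "i \<in> I" "j \<in> I" "j \<noteq> i" "a j \<in> Hi j"
  shows "section_set Si (segre_coordinate_union I Si Hi) a i = Si i"
  using assms fun_upd_in_segre_points
  by (auto simp: section_set_def mem_segre_coordinate_union)

lemma degenerate_segre_coordinate_union:
  assumes "a \<in> segre_points I Si" "i \<in> I" "j \<in> I" "j \<noteq> i" "a j \<in> Hi j"
  shows "degenerate I Si Li (segre_coordinate_union I Si Hi)"
  using assms section_segre_coordinate_union_full[of a I Si i j Hi, OF assms]
  unfolding degenerate_def non_degenerate_def hyperplane_pls_def by blast

lemma not_spiky_segre_coordinate_union:
  assumes "c \<in> segre_points I Si" "i \<in> I" "j \<in> I" "i \<noteq> j" "c i \<in> Hi i" "c j \<in> Hi j"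
  shows "\<not> spiky (segre_points I Si) (segre_lines I Si Li) (segre_coordinate_union I Si Hi)"
proof
  assume "spiky (segre_points I Si) (segre_lines I Si Li) (segre_coordinate_union I Si Hi)"
  moreover have "c \<in> segre_coordinate_union I Si Hi"
    using assms by (auto simp: mem_segre_coordinate_union)
  ultimately obtain y where y: "y \<in> segre_points I Si" "y \<notin> segre_coordinate_union I Si Hi"
    and collinear: "collinear_pls (segre_lines I Si Li) c y"
    unfolding spiky_def by blast
  obtain k where "\<forall>m. m \<noteq> k \<longrightarrow> c m = y m"
    using collinear_segre_lines_differ_in_one_coordinate[OF collinear] by blast
  then have "y i \<in> Hi i \<or> y j \<in> Hi j"
    using assms(4-6) by metis
  then show False
    using y assms(2,3) by (auto simp: mem_segre_coordinate_union)
qed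

theorem proposition3p8:
  fixes I :: "'i set" and Si :: "'i \<Rightarrow> 'a set" and Li :: "'i \<Rightarrow> 'a set set"
    and Hi :: "'i \<Rightarrow> 'a set"
  assumes "countable I"
    and "\<exists>i\<in>I. \<exists>j\<in>I. i \<noteq> j"
    and "\<forall>i\<in>I. partial_linear_space (Si i) (Li i)"
    and "\<forall>i\<in>I. hyperplane_pls (Si i) (Li i) (Hi i)"
  shows "hyperplane_pls (segre_points I Si) (segre_lines I Si Li)
           (\<Union>i\<in>I. {x \<in> segre_points I Si. x i \<in> Hi i})
    \<and> degenerate I Si Li (\<Union>i\<in>I. {x \<in> segre_points I Si. x i \<in> Hi i})
    \<and> \<not> spiky (segre_points I Si) (segre_lines I Si Li)
           (\<Union>i\<in>I. {x \<in> segre_points I Si. x i \<in> Hi i})"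
proof -
  obtain i j where ij: "i \<in> I" "j \<in> I" "i \<noteq> j"
    using assms(2) by blast
  have "\<And>k. k \<in> I \<Longrightarrow> Hi k \<noteq> {}"
    using assms(3,4) hyperplane_pls_nonempty by blast
  then obtain c where c: "c \<in> PiE I Hi"
    using PiE_eq_empty_iff[of I Hi] by blast
  have "\<And>k. k \<in> I \<Longrightarrow> Hi k \<subseteq> Si k"
    using assms(4) unfolding hyperplane_pls_def subspace_pls_def by blast
  then have c_point: "c \<in> segre_points I Si"
    using c PiE_mono unfolding segre_points_def by blast
  have "c i \<in> Hi i" "c j \<in> Hi j"
    using c ij by auto
  then show ?thesis
    unfolding segre_coordinate_union_def[symmetric]
    using hyperplane_segre_coordinate_union[of I Si Li Hi] assms(3,4)
      degenerate_segre_coordinate_union[OF c_point ij(1,2) ij(3)[symmetric]]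
      not_spiky_segre_coordinate_union[OF c_point ij]
    by simp
qed

end
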